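(* Let $\mathbb{C}$ be a pointed finitely complete Mal'tsev category and let $u:S\to X$ be a morphism in $\mathbb{C}$. The following are equivalent: (a) $u$ is a characteristic monomorphism; (b) for each protosplit monomorphism $\kappa:X\to A$ the composite $\kappa u$ is a Bourn-normal monomorphism; (c) for each reflexive relation $(R,r_1,r_2)$ on an object $Y$ together with a kernel $k:X\to R$ of $r_1$, there exist a reflexive relation $(T,t_1,t_2)$ on $Y$, a monomorphism $v:T\to R$ with $r_1v=t_1$ and $r_2v=t_2$ (a monomorphism of reflexive relations), and a kernel $l:S\to T$ of $t_1$, such that $vl=ku$; (d) the same as (c) with "reflexive relation" replaced by "equivalence relation" throughout.
   Context: A category is Mal'tsev if it is finitely complete and every internal reflexive relation is an internal equivalence relation. A relation $(R,r_1,r_2)$ on $Y$ is a pair $r_1,r_2:R\to Y$ with $\langle r_1,r_2\rangle$ a monomorphism; it is reflexive if there is $s:Y\to R$ with $r_1s=r_2s=1_Y$. A protosplit monomorphism is a kernel of a split epimorphism. A monomorphism $m:S\to Y$ is Bourn-normal if there is an equivalence relation $(R,r_1,r_2)$ on $Y$ and $\tilde m:S\times S\to R$ with $r_1\tilde m=m\pi_1$, $r_2\tilde m=m\pi_2$ and the square $r_1\tilde m=m\pi_1$ a pullback. A morphism $u:S\to X$ is a characteristic monomorphism if for every Bourn-normal monomorphism $n:X\to Y$ the composite $nu$ is a Bourn-normal monomorphism. *)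

theory Defs
  imports Main
begin

text \<open>A category with objects of type 'o and morphisms of type 'm.
  Comp C g f is the composite "g after f" (defined when Dom g = Cod f).\<close>

record ('o, 'm) cat =
  Dom :: "'m \<Rightarrow> 'o"
  Cod :: "'m \<Rightarrow> 'o"
  Comp :: "'m \<Rightarrow> 'm \<Rightarrow> 'm"
  Idm :: "'o \<Rightarrow> 'm"

definition hom :: "('o,'m) cat \<Rightarrow> 'm \<Rightarrow> 'o \<Rightarrow> 'o \<Rightarrow> bool" where
  "hom C f X Y \<longleftrightarrow> Dom C f = X \<and> Cod C f = Y"

definition category :: "('o,'m) cat \<Rightarrow> bool" where
  "category C \<longleftrightarrow>
     (\<forall>X. hom C (Idm C X) X X) \<and>
     (\<forall>f g. Dom C g = Cod C f \<longrightarrow> hom C (Comp C g f) (Dom C f) (Cod C g)) \<and>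
     (\<forall>f. Comp C (Idm C (Cod C f)) f = f \<and> Comp C f (Idm C (Dom C f)) = f) \<and>
     (\<forall>f g h. Dom C g = Cod C f \<and> Dom C h = Cod C g \<longrightarrow>
        Comp C h (Comp C g f) = Comp C (Comp C h g) f)"

definition mono :: "('o,'m) cat \<Rightarrow> 'm \<Rightarrow> bool" where
  "mono C m \<longleftrightarrow> (\<forall>f g. Cod C f = Dom C m \<and> Cod C g = Dom C m \<and> Dom C f = Dom C g \<and>
      Comp C m f = Comp C m g \<longrightarrow> f = g)"

definition is_pullback :: "('o,'m) cat \<Rightarrow> 'm \<Rightarrow> 'm \<Rightarrow> 'm \<Rightarrow> 'm \<Rightarrow> bool" where
  "is_pullback C f g p q \<longleftrightarrow>
     Cod C f = Cod C g \<and> Dom C f = Cod C p \<and> Dom C g = Cod C q \<and> Dom C p = Dom C q \<and>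
     Comp C f p = Comp C g q \<and>
     (\<forall>a b. Cod C a = Dom C f \<and> Cod C b = Dom C g \<and> Dom C a = Dom C b \<and>
        Comp C f a = Comp C g b \<longrightarrow>
        (\<exists>!h. hom C h (Dom C a) (Dom C p) \<and> Comp C p h = a \<and> Comp C q h = b))"

definition is_product :: "('o,'m) cat \<Rightarrow> 'o \<Rightarrow> 'o \<Rightarrow> 'm \<Rightarrow> 'm \<Rightarrow> bool" where
  "is_product C A B p1 p2 \<longleftrightarrow>
     Cod C p1 = A \<and> Cod C p2 = B \<and> Dom C p1 = Dom C p2 \<and>
     (\<forall>f g. Dom C f = Dom C g \<and> Cod C f = A \<and> Cod C g = B \<longrightarrow>
        (\<exists>!h. hom C h (Dom C f) (Dom C p1) \<and> Comp C p1 h = f \<and> Comp C p2 h = g))"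

definition terminal :: "('o,'m) cat \<Rightarrow> 'o \<Rightarrow> bool" where
  "terminal C T \<longleftrightarrow> (\<forall>X. \<exists>!f. hom C f X T)"

definition initial :: "('o,'m) cat \<Rightarrow> 'o \<Rightarrow> bool" where
  "initial C I \<longleftrightarrow> (\<forall>X. \<exists>!f. hom C f I X)"

definition zero_object :: "('o,'m) cat \<Rightarrow> 'o \<Rightarrow> bool" where
  "zero_object C Z \<longleftrightarrow> terminal C Z \<and> initial C Z"

definition pointed :: "('o,'m) cat \<Rightarrow> bool" where
  "pointed C \<longleftrightarrow> (\<exists>Z. zero_object C Z)"

definition finitely_complete :: "('o,'m) cat \<Rightarrow> bool" where
  "finitely_complete C \<longleftrightarrow> (\<exists>T. terminal C T) \<and>
     (\<forall>f g. Cod C f = Cod C g \<longrightarrow> (\<exists>p q. is_pullback C f g p q))"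

definition zero_mor :: "('o,'m) cat \<Rightarrow> 'm \<Rightarrow> bool" where
  "zero_mor C f \<longleftrightarrow> (\<exists>Z g h. zero_object C Z \<and> hom C g (Dom C f) Z \<and> hom C h Z (Cod C f) \<and>
      f = Comp C h g)"

definition is_kernel :: "('o,'m) cat \<Rightarrow> 'm \<Rightarrow> 'm \<Rightarrow> bool" where
  "is_kernel C k f \<longleftrightarrow> Cod C k = Dom C f \<and> zero_mor C (Comp C f k) \<and>
     (\<forall>a. Cod C a = Dom C f \<and> zero_mor C (Comp C f a) \<longrightarrow>
        (\<exists>!h. hom C h (Dom C a) (Dom C k) \<and> Comp C k h = a))"

definition split_epi :: "('o,'m) cat \<Rightarrow> 'm \<Rightarrow> bool" where
  "split_epi C f \<longleftrightarrow> (\<exists>s. hom C s (Cod C f) (Dom C f) \<and> Comp C f s = Idm C (Cod C f))"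

definition protosplit_mono :: "('o,'m) cat \<Rightarrow> 'm \<Rightarrow> bool" where
  "protosplit_mono C k \<longleftrightarrow> (\<exists>f. split_epi C f \<and> is_kernel C k f)"

text \<open>A relation (R,r1,r2) on Y; the pairing <r1,r2> : R \<rightarrow> Y \<times> Y being a
  monomorphism means exactly that r1, r2 are jointly monic.\<close>
definition relation :: "('o,'m) cat \<Rightarrow> 'o \<Rightarrow> 'm \<Rightarrow> 'm \<Rightarrow> 'o \<Rightarrow> bool" where
  "relation C R r1 r2 Y \<longleftrightarrow> hom C r1 R Y \<and> hom C r2 R Y \<and>
     (\<forall>f g. Cod C f = R \<and> Cod C g = R \<and> Dom C f = Dom C g \<and>
        Comp C r1 f = Comp C r1 g \<and> Comp C r2 f = Comp C r2 g \<longrightarrow> f = g)"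

definition reflexive_relation :: "('o,'m) cat \<Rightarrow> 'o \<Rightarrow> 'm \<Rightarrow> 'm \<Rightarrow> 'o \<Rightarrow> bool" where
  "reflexive_relation C R r1 r2 Y \<longleftrightarrow> relation C R r1 r2 Y \<and>
     (\<exists>s. hom C s Y R \<and> Comp C r1 s = Idm C Y \<and> Comp C r2 s = Idm C Y)"

definition equivalence_relation :: "('o,'m) cat \<Rightarrow> 'o \<Rightarrow> 'm \<Rightarrow> 'm \<Rightarrow> 'o \<Rightarrow> bool" where
  "equivalence_relation C R r1 r2 Y \<longleftrightarrow> reflexive_relation C R r1 r2 Y \<and>
     (\<exists>\<sigma>. hom C \<sigma> R R \<and> Comp C r1 \<sigma> = r2 \<and> Comp C r2 \<sigma> = r1) \<and>
     (\<forall>p1 p2. is_pullback C r2 r1 p1 p2 \<longrightarrow>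
        (\<exists>\<tau>. hom C \<tau> (Dom C p1) R \<and> Comp C r1 \<tau> = Comp C r1 p1 \<and> Comp C r2 \<tau> = Comp C r2 p2))"

definition maltsev :: "('o,'m) cat \<Rightarrow> bool" where
  "maltsev C \<longleftrightarrow> finitely_complete C \<and>
     (\<forall>R r1 r2 Y. reflexive_relation C R r1 r2 Y \<longrightarrow> equivalence_relation C R r1 r2 Y)"

definition bourn_normal :: "('o,'m) cat \<Rightarrow> 'm \<Rightarrow> bool" where
  "bourn_normal C m \<longleftrightarrow> mono C m \<and>
     (\<exists>R r1 r2 pi1 pi2 mt.
        equivalence_relation C R r1 r2 (Cod C m) \<and>
        is_product C (Dom C m) (Dom C m) pi1 pi2 \<and>
        hom C mt (Dom C pi1) R \<and>
        Comp C r1 mt = Comp C m pi1 \<and> Comp C r2 mt = Comp C m pi2 \<and>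
        is_pullback C r1 m mt pi1)"

definition characteristic_mono :: "('o,'m) cat \<Rightarrow> 'm \<Rightarrow> bool" where
  "characteristic_mono C u \<longleftrightarrow>
     (\<forall>n. bourn_normal C n \<and> Dom C n = Cod C u \<longrightarrow> bourn_normal C (Comp C n u))"

end

(* A monomorphism is Bourn-normal exactly when it is the composite t2 l of the second leg of an
   equivalence relation (T, t1, t2) with a kernel l of the first leg. Every kernel is normal, being
   of this form for its kernel pair; this gives (a) => (b). For (b) => (c), a kernel k of the split
   epimorphism r1 is protosplit, so k u is normal for an equivalence relation E on R, and the
   subobject {x in R | s (r1 x) E x} of R, with s the reflexivity map, is a reflexive subrelation
   whose first leg has kernel k u. For (c) => (a), present a normal n as r2 k as above and apply (c):
   in a Mal'tsev category the subrelation T is an equivalence relation, so n u = t2 l is normal.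
   The same fact, that reflexive relations are equivalence relations, identifies (c) with (d). *)

theory Submission
  imports Defs
begin

declare hom_def [simp]

locale pointed_finitely_complete_category =
  fixes C :: "('o, 'm) cat"
  assumes category: "category C" and pointed: "pointed C" and finitely_complete: "finitely_complete C"
begin

abbreviation comp :: "'m \<Rightarrow> 'm \<Rightarrow> 'm" (infixr \<open>\<cdot>\<close> 55)
  where "g \<cdot> f \<equiv> Comp C g f"

lemma Dom_Idm [simp]: "Dom C (Idm C X) = X" and Cod_Idm [simp]: "Cod C (Idm C X) = X"
  using category unfolding category_def by auto

lemma Dom_comp [simp]: "Dom C g = Cod C f \<Longrightarrow> Dom C (g \<cdot> f) = Dom C f"
  and Cod_comp [simp]: "Dom C g = Cod C f \<Longrightarrow> Cod C (g \<cdot> f) = Cod C g"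
  using category unfolding category_def by auto

lemma comp_Idm_left [simp]: "Cod C f = X \<Longrightarrow> Idm C X \<cdot> f = f"
  and comp_Idm_right [simp]: "Dom C f = X \<Longrightarrow> f \<cdot> Idm C X = f"
  using category unfolding category_def by auto

lemma comp_assoc [simp]: "Dom C g = Cod C f \<Longrightarrow> Dom C h = Cod C g \<Longrightarrow> (h \<cdot> g) \<cdot> f = h \<cdot> g \<cdot> f"
  using category unfolding category_def by metis

lemma comp_reassoc: "g \<cdot> f = w \<Longrightarrow> Dom C g = Cod C f \<Longrightarrow> Dom C f = Cod C h \<Longrightarrow> g \<cdot> f \<cdot> h = w \<cdot> h"
  by (metis comp_assoc)

lemma monoD: "mono C m \<Longrightarrow> Cod C a = Dom C m \<Longrightarrow> Cod C b = Dom C m \<Longrightarrow> Dom C a = Dom C b \<Longrightarrow>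
    m \<cdot> a = m \<cdot> b \<Longrightarrow> a = b"
  unfolding mono_def by blast

lemma mono_if_comp_mono:
  assumes "mono C (g \<cdot> f)" and "Dom C g = Cod C f"
  shows "mono C f"
  unfolding mono_def
proof (intro allI impI)
  fix a b assume ab: "Cod C a = Dom C f \<and> Cod C b = Dom C f \<and> Dom C a = Dom C b \<and> f \<cdot> a = f \<cdot> b"
  then have "(g \<cdot> f) \<cdot> a = (g \<cdot> f) \<cdot> b"
    using assms(2) by (metis comp_assoc)
  then show "a = b"
    using monoD[OF assms(1)] ab assms(2) by simp
qed

definition zero_obj :: 'o where "zero_obj = (SOME Z. zero_object C Z)"

lemma zero_object_zero_obj: "zero_object C zero_obj"
  using pointed unfolding pointed_def zero_obj_def by (rule someI_ex)

lemma zero_object_hom_unique: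
  assumes "zero_object C Z"
  shows to_zero_object_unique: "hom C f A Z \<Longrightarrow> hom C g A Z \<Longrightarrow> f = g"
    and from_zero_object_unique: "hom C f Z B \<Longrightarrow> hom C g Z B \<Longrightarrow> f = g"
  using assms unfolding zero_object_def terminal_def initial_def by blast+

definition to_zero :: "'o \<Rightarrow> 'm" where "to_zero A = (THE f. hom C f A zero_obj)"
definition from_zero :: "'o \<Rightarrow> 'm" where "from_zero B = (THE f. hom C f zero_obj B)"

lemma to_zero: "hom C (to_zero A) A zero_obj"
proof -
  have "\<exists>!f. hom C f A zero_obj"
    using zero_object_zero_obj unfolding zero_object_def terminal_def by blast
  then show ?thesis unfolding to_zero_def by (rule theI')
qed

lemma from_zero: "hom C (from_zero B) zero_obj B"
proof -
  have "\<exists>!f. hom C f zero_obj B"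
    using zero_object_zero_obj unfolding zero_object_def initial_def by blast
  then show ?thesis unfolding from_zero_def by (rule theI')
qed

definition zero_hom :: "'o \<Rightarrow> 'o \<Rightarrow> 'm" where "zero_hom A B = from_zero B \<cdot> to_zero A"

lemma Dom_zero_hom [simp]: "Dom C (zero_hom A B) = A" and Cod_zero_hom [simp]: "Cod C (zero_hom A B) = B"
  unfolding zero_hom_def using to_zero from_zero by auto

lemma comp_zero_hom [simp]: "Dom C g = B \<Longrightarrow> g \<cdot> zero_hom A B = zero_hom A (Cod C g)"
proof -
  assume g: "Dom C g = B"
  have "g \<cdot> from_zero B = from_zero (Cod C g)"
    using g from_zero by (intro from_zero_object_unique[OF zero_object_zero_obj]) auto
  from comp_reassoc[OF this, of "to_zero A"] show ?thesis
    unfolding zero_hom_def using g to_zero from_zero by simp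
qed

lemma zero_hom_comp [simp]: "Cod C f = A \<Longrightarrow> zero_hom A B \<cdot> f = zero_hom (Dom C f) B"
proof -
  assume f: "Cod C f = A"
  have "to_zero A \<cdot> f = to_zero (Dom C f)"
    using f to_zero by (intro to_zero_object_unique[OF zero_object_zero_obj]) auto
  then show ?thesis
    unfolding zero_hom_def using f to_zero from_zero by simp
qed

lemma zero_mor_iff: "zero_mor C f \<longleftrightarrow> f = zero_hom (Dom C f) (Cod C f)"
proof
  assume "zero_mor C f"
  then obtain Z g h where Z: "zero_object C Z" and g: "hom C g (Dom C f) Z"
    and h: "hom C h Z (Cod C f)" and f: "f = h \<cdot> g"
    unfolding zero_mor_def by blast
  have Z_endo: "from_zero Z \<cdot> to_zero Z = Idm C Z"
    using to_zero from_zero by (intro from_zero_object_unique[OF Z]) auto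
  have "f = (h \<cdot> from_zero Z) \<cdot> (to_zero Z \<cdot> g)"
    using comp_reassoc[OF Z_endo, of g] f g h to_zero from_zero by simp
  also have "h \<cdot> from_zero Z = from_zero (Cod C f)"
    using h from_zero by (intro from_zero_object_unique[OF zero_object_zero_obj]) auto
  also have "to_zero Z \<cdot> g = to_zero (Dom C f)"
    using g to_zero by (intro to_zero_object_unique[OF zero_object_zero_obj]) auto
  finally show "f = zero_hom (Dom C f) (Cod C f)"
    unfolding zero_hom_def .
next
  assume "f = zero_hom (Dom C f) (Cod C f)"
  then show "zero_mor C f"
    unfolding zero_mor_def zero_hom_def using zero_object_zero_obj to_zero from_zero by blast
qed

lemma zero_mor_comp_iff:
  "Dom C g = Cod C f \<Longrightarrow> zero_mor C (g \<cdot> f) \<longleftrightarrow> g \<cdot> f = zero_hom (Dom C f) (Cod C g)"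
  by (simp add: zero_mor_iff)

lemma zero_mor_zero_hom [simp]: "zero_mor C (zero_hom A B)"
  by (simp add: zero_mor_iff)

section \<open>Finite limits\<close>

lemma pullbackD:
  assumes "is_pullback C f g p q"
  shows "Cod C f = Cod C g" "Dom C f = Cod C p" "Dom C g = Cod C q" "Dom C p = Dom C q"
    "f \<cdot> p = g \<cdot> q"
  using assms unfolding is_pullback_def by blast+

lemma pullback_universal:
  assumes "is_pullback C f g p q" "Cod C a = Dom C f" "Cod C b = Dom C g" "Dom C a = Dom C b"
    "f \<cdot> a = g \<cdot> b"
  shows "\<exists>!h. hom C h (Dom C a) (Dom C p) \<and> p \<cdot> h = a \<and> q \<cdot> h = b"
  using assms unfolding is_pullback_def by blast

lemma pullback_factor:
  assumes "is_pullback C f g p q" "Cod C a = Dom C f" "Cod C b = Dom C g" "Dom C a = Dom C b"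
    "f \<cdot> a = g \<cdot> b"
  obtains h where "Dom C h = Dom C a" "Cod C h = Dom C p" "p \<cdot> h = a" "q \<cdot> h = b"
  using pullback_universal[OF assms] by auto

lemma pullback_jointly_mono:
  assumes P: "is_pullback C f g p q" and "Cod C h = Dom C p" "Cod C h' = Dom C p" "Dom C h = Dom C h'"
    and "p \<cdot> h = p \<cdot> h'" "q \<cdot> h = q \<cdot> h'"
  shows "h = h'"
proof -
  note sq = pullbackD[OF P]
  have "f \<cdot> p \<cdot> h = g \<cdot> q \<cdot> h"
    using comp_reassoc[OF sq(5), of h] sq assms(2) by simp
  then have "\<exists>!k. hom C k (Dom C h) (Dom C p) \<and> p \<cdot> k = p \<cdot> h \<and> q \<cdot> k = q \<cdot> h"
    using pullback_universal[OF P, of "p \<cdot> h" "q \<cdot> h"] sq assms(2) by simp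
  then show ?thesis
    using assms by auto
qed

lemma pullbackI:
  assumes "Cod C f = Cod C g" "Dom C f = Cod C p" "Dom C g = Cod C q" "Dom C p = Dom C q"
    and "f \<cdot> p = g \<cdot> q" and "mono C p"
    and factor: "\<And>a b. Cod C a = Dom C f \<Longrightarrow> Cod C b = Dom C g \<Longrightarrow> Dom C a = Dom C b \<Longrightarrow>
      f \<cdot> a = g \<cdot> b \<Longrightarrow> \<exists>h. Dom C h = Dom C a \<and> Cod C h = Dom C p \<and> p \<cdot> h = a \<and> q \<cdot> h = b"
  shows "is_pullback C f g p q"
  unfolding is_pullback_def
proof (intro conjI allI impI)
  fix a b
  assume "Cod C a = Dom C f \<and> Cod C b = Dom C g \<and> Dom C a = Dom C b \<and> f \<cdot> a = g \<cdot> b"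
  then obtain h where h: "Dom C h = Dom C a" "Cod C h = Dom C p" "p \<cdot> h = a" "q \<cdot> h = b"
    using factor by blast
  show "\<exists>!h. hom C h (Dom C a) (Dom C p) \<and> p \<cdot> h = a \<and> q \<cdot> h = b"
  proof (rule ex1I[of _ h])
    fix h' assume "hom C h' (Dom C a) (Dom C p) \<and> p \<cdot> h' = a \<and> q \<cdot> h' = b"
    then show "h' = h"
      using monoD[OF \<open>mono C p\<close>, of h' h] h by auto
  qed (use h in auto)
qed (use assms in auto)

lemma pullback_exists: "Cod C f = Cod C g \<Longrightarrow> \<exists>p q. is_pullback C f g p q"
  using finitely_complete unfolding finitely_complete_def by blast

lemma productD:
  assumes "is_product C A B p1 p2"
  shows "Cod C p1 = A" "Cod C p2 = B" "Dom C p1 = Dom C p2"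
  using assms unfolding is_product_def by blast+

lemma product_universal:
  assumes "is_product C A B p1 p2" "Dom C f = Dom C g" "Cod C f = A" "Cod C g = B"
  shows "\<exists>!h. hom C h (Dom C f) (Dom C p1) \<and> p1 \<cdot> h = f \<and> p2 \<cdot> h = g"
  using assms unfolding is_product_def by blast

lemma product_factor:
  assumes "is_product C A B p1 p2" "Dom C f = Dom C g" "Cod C f = A" "Cod C g = B"
  obtains h where "Dom C h = Dom C f" "Cod C h = Dom C p1" "p1 \<cdot> h = f" "p2 \<cdot> h = g"
  using product_universal[OF assms] by auto

lemma product_jointly_mono:
  assumes P: "is_product C A B p1 p2" and "Cod C h = Dom C p1" "Cod C h' = Dom C p1"
    "Dom C h = Dom C h'" and "p1 \<cdot> h = p1 \<cdot> h'" "p2 \<cdot> h = p2 \<cdot> h'"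
  shows "h = h'"
proof -
  have "\<exists>!k. hom C k (Dom C h) (Dom C p1) \<and> p1 \<cdot> k = p1 \<cdot> h \<and> p2 \<cdot> k = p2 \<cdot> h"
    using product_universal[OF P, of "p1 \<cdot> h" "p2 \<cdot> h"] productD[OF P] assms(2) by simp
  then show ?thesis
    using assms by auto
qed

text \<open>Binary products are pullbacks over a terminal object.\<close>
lemma product_exists: "\<exists>p1 p2. is_product C A B p1 p2"
proof -
  obtain T where T: "terminal C T"
    using finitely_complete unfolding finitely_complete_def by blast
  then obtain ta tb where ta: "hom C ta A T" and tb: "hom C tb B T"
    unfolding terminal_def by blast
  have to_T_unique: "hom C f X T \<Longrightarrow> hom C g X T \<Longrightarrow> f = g" for f g X
    using T unfolding terminal_def by blast
  obtain p q where P: "is_pullback C ta tb p q"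
    using pullback_exists[of ta tb] ta tb by auto
  note sq = pullbackD[OF P]
  have "is_product C A B p q"
    unfolding is_product_def
  proof (intro conjI allI impI)
    fix f g assume fg: "Dom C f = Dom C g \<and> Cod C f = A \<and> Cod C g = B"
    then have "ta \<cdot> f = tb \<cdot> g"
      using ta tb by (intro to_T_unique[of _ "Dom C f"]) auto
    then obtain h where h: "Dom C h = Dom C f" "Cod C h = Dom C p" "p \<cdot> h = f" "q \<cdot> h = g"
      using pullback_factor[OF P, of f g] fg ta tb by auto
    show "\<exists>!h. hom C h (Dom C f) (Dom C p) \<and> p \<cdot> h = f \<and> q \<cdot> h = g"
    proof (rule ex1I[of _ h])
      fix h' assume "hom C h' (Dom C f) (Dom C p) \<and> p \<cdot> h' = f \<and> q \<cdot> h' = g"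
      then show "h' = h"
        using pullback_jointly_mono[OF P, of h' h] h by auto
    qed (use h in auto)
  qed (use sq ta tb in auto)
  then show ?thesis by blast
qed

text \<open>The equalizer of \<open>f, g : A \<rightarrow> B\<close> is the pullback of the two graphs
  \<open>\<langle>1, f\<rangle>, \<langle>1, g\<rangle> : A \<rightarrow> A \<times> B\<close>.\<close>
lemma equalizer_exists:
  assumes f: "hom C f A B" and g: "hom C g A B"
  obtains j where "Cod C j = A" "f \<cdot> j = g \<cdot> j" "mono C j"
    "\<And>a. Cod C a = A \<Longrightarrow> f \<cdot> a = g \<cdot> a \<Longrightarrow> \<exists>h. Dom C h = Dom C a \<and> Cod C h = Dom C j \<and> j \<cdot> h = a"
proof -
  obtain p1 p2 where P: "is_product C A B p1 p2"
    using product_exists by blast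
  note pr = productD[OF P]
  obtain \<alpha> where \<alpha>: "Dom C \<alpha> = A" "Cod C \<alpha> = Dom C p1" "p1 \<cdot> \<alpha> = Idm C A" "p2 \<cdot> \<alpha> = f"
    using product_factor[OF P, of "Idm C A" f] f by auto
  obtain \<beta> where \<beta>: "Dom C \<beta> = A" "Cod C \<beta> = Dom C p1" "p1 \<cdot> \<beta> = Idm C A" "p2 \<cdot> \<beta> = g"
    using product_factor[OF P, of "Idm C A" g] g by auto
  have graph_comp: "p1 \<cdot> \<alpha> \<cdot> a = a" "p2 \<cdot> \<alpha> \<cdot> a = f \<cdot> a" "p1 \<cdot> \<beta> \<cdot> a = a" "p2 \<cdot> \<beta> \<cdot> a = g \<cdot> a"
    if "Cod C a = A" for a
    using comp_reassoc[OF \<alpha>(3), of a] comp_reassoc[OF \<alpha>(4), of a]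
      comp_reassoc[OF \<beta>(3), of a] comp_reassoc[OF \<beta>(4), of a] \<alpha> \<beta> pr that by simp_all
  obtain p q where Q: "is_pullback C \<alpha> \<beta> p q"
    using pullback_exists[of \<alpha> \<beta>] \<alpha> \<beta> by auto
  note sq = pullbackD[OF Q]
  have pA: "Cod C p = A" and qA: "Cod C q = A"
    using sq \<alpha> \<beta> by auto
  have "p = q"
    using graph_comp(1)[OF pA] graph_comp(3)[OF qA] sq(5) by simp
  show thesis
  proof
    show "Cod C p = A" by (fact pA)
    show "f \<cdot> p = g \<cdot> p"
      using graph_comp(2)[OF pA] graph_comp(4)[OF qA] sq(5) \<open>p = q\<close> by simp
    show "mono C p"
      unfolding mono_def using pullback_jointly_mono[OF Q] \<open>p = q\<close> by auto
  next
    fix a assume a: "Cod C a = A" "f \<cdot> a = g \<cdot> a"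
    have "\<alpha> \<cdot> a = \<beta> \<cdot> a"
      by (rule product_jointly_mono[OF P]) (use graph_comp[OF a(1)] a \<alpha> \<beta> in auto)
    then obtain h where "Dom C h = Dom C a" "Cod C h = Dom C p" "p \<cdot> h = a"
      using pullback_factor[OF Q, of a a] a \<alpha> \<beta> by auto
    then show "\<exists>h. Dom C h = Dom C a \<and> Cod C h = Dom C p \<and> p \<cdot> h = a"
      by blast
  qed
qed

lemma kernelD:
  assumes "is_kernel C k f"
  shows "Cod C k = Dom C f" and "f \<cdot> k = zero_hom (Dom C k) (Cod C f)"
  using assms unfolding is_kernel_def by (auto simp: zero_mor_comp_iff)

lemma kernel_universal:
  assumes "is_kernel C k f" "Cod C a = Dom C f" "f \<cdot> a = zero_hom (Dom C a) (Cod C f)"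
  shows "\<exists>!h. hom C h (Dom C a) (Dom C k) \<and> k \<cdot> h = a"
proof -
  have "zero_mor C (f \<cdot> a)"
    using assms(3) by simp
  then show ?thesis
    using assms(1,2) unfolding is_kernel_def by blast
qed

lemma kernel_factor:
  assumes "is_kernel C k f" "Cod C a = Dom C f" "f \<cdot> a = zero_hom (Dom C a) (Cod C f)"
  obtains h where "Dom C h = Dom C a" "Cod C h = Dom C k" "k \<cdot> h = a"
  using kernel_universal[OF assms] by auto

lemma kernel_mono:
  assumes K: "is_kernel C k f"
  shows "mono C k"
  unfolding mono_def
proof (intro allI impI)
  fix a b assume ab: "Cod C a = Dom C k \<and> Cod C b = Dom C k \<and> Dom C a = Dom C b \<and> k \<cdot> a = k \<cdot> b"
  note k = kernelD[OF K]
  have "f \<cdot> k \<cdot> a = zero_hom (Dom C a) (Cod C f)"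
    using comp_reassoc[OF k(2), of a] k ab by simp
  then have "\<exists>!h. hom C h (Dom C a) (Dom C k) \<and> k \<cdot> h = k \<cdot> a"
    using kernel_universal[OF K, of "k \<cdot> a"] k ab by simp
  then show "a = b"
    using ab by auto
qed

lemma kernelI:
  assumes k: "Cod C k = Dom C f" "f \<cdot> k = zero_hom (Dom C k) (Cod C f)" and "mono C k"
    and factor: "\<And>a. Cod C a = Dom C f \<Longrightarrow> f \<cdot> a = zero_hom (Dom C a) (Cod C f) \<Longrightarrow>
      \<exists>h. Dom C h = Dom C a \<and> Cod C h = Dom C k \<and> k \<cdot> h = a"
  shows "is_kernel C k f"
  unfolding is_kernel_def
proof (intro conjI allI impI)
  show "Cod C k = Dom C f" and "zero_mor C (f \<cdot> k)"
    using k by simp_all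
  fix a assume a: "Cod C a = Dom C f \<and> zero_mor C (f \<cdot> a)"
  then have "f \<cdot> a = zero_hom (Dom C a) (Cod C f)"
    using zero_mor_comp_iff[of f a] by simp
  then obtain h where h: "Dom C h = Dom C a" "Cod C h = Dom C k" "k \<cdot> h = a"
    using factor a by blast
  show "\<exists>!h. hom C h (Dom C a) (Dom C k) \<and> k \<cdot> h = a"
  proof (rule ex1I[of _ h])
    fix h' assume "hom C h' (Dom C a) (Dom C k) \<and> k \<cdot> h' = a"
    then show "h' = h"
      using monoD[OF \<open>mono C k\<close>, of h' h] h by simp
  qed (use h in simp)
qed

lemma relationD:
  assumes "relation C R r1 r2 Y"
  shows "Dom C r1 = R" "Cod C r1 = Y" "Dom C r2 = R" "Cod C r2 = Y"
  using assms unfolding relation_def by auto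

lemma relation_jointly_mono:
  assumes "relation C R r1 r2 Y" "Cod C a = R" "Cod C b = R" "Dom C a = Dom C b"
    "r1 \<cdot> a = r1 \<cdot> b" "r2 \<cdot> a = r2 \<cdot> b"
  shows "a = b"
  using assms unfolding relation_def by blast

lemma reflexive_relation_relation: "reflexive_relation C R r1 r2 Y \<Longrightarrow> relation C R r1 r2 Y"
  unfolding reflexive_relation_def by blast

lemma equivalence_relation_reflexive:
  "equivalence_relation C R r1 r2 Y \<Longrightarrow> reflexive_relation C R r1 r2 Y"
  unfolding equivalence_relation_def by blast

lemma equivalence_relation_relation: "equivalence_relation C R r1 r2 Y \<Longrightarrow> relation C R r1 r2 Y"
  by (simp add: equivalence_relation_reflexive reflexive_relation_relation)

lemma reflexive_relationE:
  assumes "reflexive_relation C R r1 r2 Y"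
  obtains s where "Dom C s = Y" "Cod C s = R" "r1 \<cdot> s = Idm C Y" "r2 \<cdot> s = Idm C Y"
  using assms unfolding reflexive_relation_def by auto

lemma equivalence_relation_sym:
  assumes E: "equivalence_relation C R r1 r2 Y" and a: "Cod C a = R"
  obtains c where "Dom C c = Dom C a" "Cod C c = R" "r1 \<cdot> c = r2 \<cdot> a" "r2 \<cdot> c = r1 \<cdot> a"
proof -
  obtain \<sigma> where \<sigma>: "Dom C \<sigma> = R" "Cod C \<sigma> = R" "r1 \<cdot> \<sigma> = r2" "r2 \<cdot> \<sigma> = r1"
    using E unfolding equivalence_relation_def by auto
  note r = relationD[OF equivalence_relation_relation[OF E]]
  show thesis
    by (rule that[of "\<sigma> \<cdot> a"]) (use comp_reassoc[OF \<sigma>(3), of a] comp_reassoc[OF \<sigma>(4), of a] \<sigma> r a in simp_all)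
qed

lemma equivalence_relation_trans:
  assumes E: "equivalence_relation C R r1 r2 Y" and "Cod C a = R" "Cod C b = R" "Dom C a = Dom C b"
    and "r2 \<cdot> a = r1 \<cdot> b"
  obtains c where "Dom C c = Dom C a" "Cod C c = R" "r1 \<cdot> c = r1 \<cdot> a" "r2 \<cdot> c = r2 \<cdot> b"
proof -
  note r = relationD[OF equivalence_relation_relation[OF E]]
  obtain q1 q2 where Q: "is_pullback C r2 r1 q1 q2"
    using pullback_exists[of r2 r1] r by auto
  note sq = pullbackD[OF Q]
  obtain \<tau> where \<tau>: "hom C \<tau> (Dom C q1) R" "r1 \<cdot> \<tau> = r1 \<cdot> q1" "r2 \<cdot> \<tau> = r2 \<cdot> q2"
    using E Q unfolding equivalence_relation_def by blast
  obtain h where h: "Dom C h = Dom C a" "Cod C h = Dom C q1" "q1 \<cdot> h = a" "q2 \<cdot> h = b"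
    using pullback_factor[OF Q, of a b] assms r by auto
  show thesis
    by (rule that[of "\<tau> \<cdot> h"])
      (use comp_reassoc[OF \<tau>(2), of h] comp_reassoc[OF \<tau>(3), of h] \<tau> h sq r in simp_all)
qed

lemma relation_comp_mono:
  assumes R: "relation C R r1 r2 Y" and "mono C v" "Cod C v = R"
  shows "relation C (Dom C v) (r1 \<cdot> v) (r2 \<cdot> v) Y"
  unfolding relation_def
proof (intro conjI allI impI)
  note r = relationD[OF R]
  fix a b assume ab: "Cod C a = Dom C v \<and> Cod C b = Dom C v \<and> Dom C a = Dom C b \<and>
    (r1 \<cdot> v) \<cdot> a = (r1 \<cdot> v) \<cdot> b \<and> (r2 \<cdot> v) \<cdot> a = (r2 \<cdot> v) \<cdot> b"
  then have ab': "Cod C a = Dom C v" "Cod C b = Dom C v" "Dom C a = Dom C b"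
    and "r1 \<cdot> v \<cdot> a = r1 \<cdot> v \<cdot> b" "r2 \<cdot> v \<cdot> a = r2 \<cdot> v \<cdot> b"
    using r assms(3) by auto
  then have "v \<cdot> a = v \<cdot> b"
    using relation_jointly_mono[OF R, of "v \<cdot> a" "v \<cdot> b"] assms(3) by simp
  then show "a = b"
    using monoD[OF assms(2)] ab' by blast
qed (use relationD[OF R] assms(3) in simp_all)

lemma kernel_pair_equivalence_relation:
  assumes Q: "is_pullback C f f q1 q2"
  shows "equivalence_relation C (Dom C q1) q1 q2 (Dom C f)"
  unfolding equivalence_relation_def reflexive_relation_def
proof (intro conjI allI impI)
  note sq = pullbackD[OF Q]
  show "relation C (Dom C q1) q1 q2 (Dom C f)"
    unfolding relation_def
  proof (intro conjI allI impI)
    fix a b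
    assume "Cod C a = Dom C q1 \<and> Cod C b = Dom C q1 \<and> Dom C a = Dom C b \<and>
      q1 \<cdot> a = q1 \<cdot> b \<and> q2 \<cdot> a = q2 \<cdot> b"
    then show "a = b"
      using pullback_jointly_mono[OF Q, of a b] by blast
  qed (use sq in simp_all)
  obtain s where "Dom C s = Dom C f" "Cod C s = Dom C q1" "q1 \<cdot> s = Idm C (Dom C f)" "q2 \<cdot> s = Idm C (Dom C f)"
    by (rule pullback_factor[OF Q, of "Idm C (Dom C f)" "Idm C (Dom C f)"]) simp_all
  then show "\<exists>s. hom C s (Dom C f) (Dom C q1) \<and> q1 \<cdot> s = Idm C (Dom C f) \<and> q2 \<cdot> s = Idm C (Dom C f)"
    by auto
  obtain \<sigma> where "Dom C \<sigma> = Dom C q1" "Cod C \<sigma> = Dom C q1" "q1 \<cdot> \<sigma> = q2" "q2 \<cdot> \<sigma> = q1"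
    by (rule pullback_factor[OF Q, of q2 q1]) (use sq in simp_all)
  then show "\<exists>\<sigma>. hom C \<sigma> (Dom C q1) (Dom C q1) \<and> q1 \<cdot> \<sigma> = q2 \<and> q2 \<cdot> \<sigma> = q1"
    by auto
next
  fix p1 p2 assume P: "is_pullback C q2 q1 p1 p2"
  note sq = pullbackD[OF Q] and sq' = pullbackD[OF P]
  have "f \<cdot> q1 \<cdot> p1 = f \<cdot> q2 \<cdot> p1"
    using comp_reassoc[OF sq(5), of p1] sq sq' by simp
  also have "\<dots> = f \<cdot> q1 \<cdot> p2"
    using sq'(5) by simp
  also have "\<dots> = f \<cdot> q2 \<cdot> p2"
    using comp_reassoc[OF sq(5), of p2] sq sq' by simp
  finally have "f \<cdot> q1 \<cdot> p1 = f \<cdot> q2 \<cdot> p2" .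
  with sq sq' obtain \<tau> where "Dom C \<tau> = Dom C p1" "Cod C \<tau> = Dom C q1" "q1 \<cdot> \<tau> = q1 \<cdot> p1" "q2 \<cdot> \<tau> = q2 \<cdot> p2"
    using pullback_factor[OF Q, of "q1 \<cdot> p1" "q2 \<cdot> p2"] by auto
  then show "\<exists>\<tau>. hom C \<tau> (Dom C p1) (Dom C q1) \<and> q1 \<cdot> \<tau> = q1 \<cdot> p1 \<and> q2 \<cdot> \<tau> = q2 \<cdot> p2"
    by auto
qed

section \<open>Bourn-normal monomorphisms\<close>

lemma mono_snd_comp_kernel_fst:
  assumes R: "relation C T t1 t2 Y" and K: "is_kernel C l t1"
  shows "mono C (t2 \<cdot> l)"
  unfolding mono_def
proof (intro allI impI)
  note r = relationD[OF R] and k = kernelD[OF K]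
  fix a b assume "Cod C a = Dom C (t2 \<cdot> l) \<and> Cod C b = Dom C (t2 \<cdot> l) \<and> Dom C a = Dom C b \<and>
    (t2 \<cdot> l) \<cdot> a = (t2 \<cdot> l) \<cdot> b"
  then have ab: "Cod C a = Dom C l" "Cod C b = Dom C l" "Dom C a = Dom C b"
    and snd: "t2 \<cdot> l \<cdot> a = t2 \<cdot> l \<cdot> b"
    using r k by auto
  have "t1 \<cdot> l \<cdot> a = t1 \<cdot> l \<cdot> b"
    using comp_reassoc[OF k(2), of a] comp_reassoc[OF k(2), of b] r k ab by simp
  then have "l \<cdot> a = l \<cdot> b"
    using relation_jointly_mono[OF R, of "l \<cdot> a" "l \<cdot> b"] snd r k ab by simp
  then show "a = b"
    using monoD[OF kernel_mono[OF K]] ab by blast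
qed

text \<open>Read elementwise: if \<open>l\<close> is the kernel of \<open>t1\<close>, the normal subobject \<open>t2 l\<close>
  consists of the elements \<open>T\<close>-related to \<open>0\<close>; any two of them are related to each other,
  and anything related to one of them is again one of them.\<close>
lemma equivalence_relates_kernel_snd_images:
  assumes E: "equivalence_relation C T t1 t2 Y" and K: "is_kernel C l t1"
    and a: "Cod C a = Dom C l" and b: "Cod C b = Dom C l" "Dom C a = Dom C b"
  obtains c where "Dom C c = Dom C a" "Cod C c = T" "t1 \<cdot> c = t2 \<cdot> l \<cdot> a" "t2 \<cdot> c = t2 \<cdot> l \<cdot> b"
proof -
  note r = relationD[OF equivalence_relation_relation[OF E]]
    and k = kernelD[OF K]
  obtain c0 where c0: "Dom C c0 = Dom C a" "Cod C c0 = T" "t1 \<cdot> c0 = t2 \<cdot> l \<cdot> a" "t2 \<cdot> c0 = t1 \<cdot> l \<cdot> a"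
    using equivalence_relation_sym[OF E, of "l \<cdot> a"] a r k by auto
  have "t2 \<cdot> c0 = t1 \<cdot> l \<cdot> b"
    using c0(4) comp_reassoc[OF k(2), of a] comp_reassoc[OF k(2), of b] a b r k by simp
  then obtain c where "Dom C c = Dom C a" "Cod C c = T" "t1 \<cdot> c = t1 \<cdot> c0" "t2 \<cdot> c = t2 \<cdot> l \<cdot> b"
    using equivalence_relation_trans[OF E, of c0 "l \<cdot> b"] c0 b r k by auto
  with c0 show thesis
    using that by simp
qed

lemma equivalence_kernel_snd_image_closed:
  assumes E: "equivalence_relation C T t1 t2 Y" and K: "is_kernel C l t1"
    and a: "Cod C a = T" and b: "Cod C b = Dom C l" "Dom C a = Dom C b" and ab: "t1 \<cdot> a = t2 \<cdot> l \<cdot> b"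
  obtains d where "Dom C d = Dom C a" "Cod C d = Dom C l" "t2 \<cdot> a = t2 \<cdot> l \<cdot> d"
proof -
  note r = relationD[OF equivalence_relation_relation[OF E]]
    and k = kernelD[OF K]
  obtain c where c: "Dom C c = Dom C a" "Cod C c = T" "t1 \<cdot> c = t1 \<cdot> l \<cdot> b" "t2 \<cdot> c = t2 \<cdot> a"
    using equivalence_relation_trans[OF E, of "l \<cdot> b" a] a b ab r k by auto
  have "t1 \<cdot> c = zero_hom (Dom C c) (Cod C t1)"
    using c(3) comp_reassoc[OF k(2), of b] b c r k by simp
  then obtain d where "Dom C d = Dom C a" "Cod C d = Dom C l" "l \<cdot> d = c"
    using kernel_factor[OF K, of c] c r by auto
  with c show thesis
    using that[of d] r k by auto
qed

lemma mono_if_legs_factor_through_mono: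
  assumes P: "is_product C A A p1 p2" and m: "mono C m" "Dom C m = A"
    and "Dom C t1 = Cod C mt" "Dom C t2 = Cod C mt" "Dom C mt = Dom C p1"
    and t: "t1 \<cdot> mt = m \<cdot> p1" "t2 \<cdot> mt = m \<cdot> p2"
  shows "mono C mt"
  unfolding mono_def
proof (intro allI impI)
  note pr = productD[OF P]
  fix a b assume "Cod C a = Dom C mt \<and> Cod C b = Dom C mt \<and> Dom C a = Dom C b \<and> mt \<cdot> a = mt \<cdot> b"
  then have ab: "Cod C a = Dom C p1" "Cod C b = Dom C p1" "Dom C a = Dom C b" "mt \<cdot> a = mt \<cdot> b"
    using assms by auto
  have legs: "t1 \<cdot> mt \<cdot> h = m \<cdot> p1 \<cdot> h" "t2 \<cdot> mt \<cdot> h = m \<cdot> p2 \<cdot> h" if "Cod C h = Dom C p1" for h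
    using comp_reassoc[OF t(1), of h] comp_reassoc[OF t(2), of h] that assms pr by simp_all
  have "m \<cdot> p1 \<cdot> a = m \<cdot> p1 \<cdot> b" "m \<cdot> p2 \<cdot> a = m \<cdot> p2 \<cdot> b"
    using legs[OF ab(1)] legs[OF ab(2)] ab(4) by simp_all
  then have "p1 \<cdot> a = p1 \<cdot> b" "p2 \<cdot> a = p2 \<cdot> b"
    using monoD[OF m(1), of "p1 \<cdot> a" "p1 \<cdot> b"] monoD[OF m(1), of "p2 \<cdot> a" "p2 \<cdot> b"] ab pr m by simp_all
  then show "a = b"
    using product_jointly_mono[OF P] ab by blast
qed

lemma equivalence_kernel_square_pullback:
  assumes E: "equivalence_relation C T t1 t2 Y" and K: "is_kernel C l t1"
    and P: "is_product C (Dom C l) (Dom C l) p1 p2"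
  obtains mt where "hom C mt (Dom C p1) T" "t1 \<cdot> mt = (t2 \<cdot> l) \<cdot> p1" "t2 \<cdot> mt = (t2 \<cdot> l) \<cdot> p2"
    "is_pullback C t1 (t2 \<cdot> l) mt p1"
proof -
  note r = relationD[OF equivalence_relation_relation[OF E]]
    and k = kernelD[OF K] and pr = productD[OF P]
  have m: "mono C (t2 \<cdot> l)"
    using mono_snd_comp_kernel_fst[OF equivalence_relation_relation[OF E] K] .
  obtain mt where mt: "Dom C mt = Dom C p1" "Cod C mt = T" "t1 \<cdot> mt = t2 \<cdot> l \<cdot> p1" "t2 \<cdot> mt = t2 \<cdot> l \<cdot> p2"
    using equivalence_relates_kernel_snd_images[OF E K, of p1 p2] pr by auto
  have mt_comp: "t1 \<cdot> mt \<cdot> h = (t2 \<cdot> l) \<cdot> p1 \<cdot> h" "t2 \<cdot> mt \<cdot> h = (t2 \<cdot> l) \<cdot> p2 \<cdot> h"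
    if "Cod C h = Dom C p1" for h
    using comp_reassoc[OF mt(3), of h] comp_reassoc[OF mt(4), of h] mt r k pr that by simp_all
  have "mono C mt"
    by (rule mono_if_legs_factor_through_mono[OF P m]) (use mt r k pr in simp_all)
  moreover have "\<exists>h. Dom C h = Dom C a \<and> Cod C h = Dom C mt \<and> mt \<cdot> h = a \<and> p1 \<cdot> h = b"
    if a: "Cod C a = Dom C t1" and b: "Cod C b = Dom C (t2 \<cdot> l)" "Dom C a = Dom C b"
      and ab: "t1 \<cdot> a = (t2 \<cdot> l) \<cdot> b" for a b
  proof -
    obtain d where d: "Dom C d = Dom C a" "Cod C d = Dom C l" "t2 \<cdot> a = t2 \<cdot> l \<cdot> d"
      using equivalence_kernel_snd_image_closed[OF E K, of a b] a b ab r k by auto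
    obtain h where h: "Dom C h = Dom C a" "Cod C h = Dom C p1" "p1 \<cdot> h = b" "p2 \<cdot> h = d"
      using product_factor[OF P, of b d] b d r k by auto
    have "mt \<cdot> h = a"
      using relation_jointly_mono[OF equivalence_relation_relation[OF E],
          of "mt \<cdot> h" a] mt_comp[OF h(2)] h d a ab mt r k by simp
    with h mt show ?thesis by auto
  qed
  ultimately have "is_pullback C t1 (t2 \<cdot> l) mt p1"
    by (intro pullbackI) (use mt r k pr in simp_all)
  with mt show thesis
    using that[of mt] r k pr by simp
qed

lemma bourn_normal_snd_comp_kernel_fst:
  assumes E: "equivalence_relation C T t1 t2 Y" and K: "is_kernel C l t1"
  shows "bourn_normal C (t2 \<cdot> l)"
proof -
  note r = relationD[OF equivalence_relation_relation[OF E]]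
    and k = kernelD[OF K]
  obtain p1 p2 where P: "is_product C (Dom C l) (Dom C l) p1 p2"
    using product_exists by blast
  obtain mt where "hom C mt (Dom C p1) T" "t1 \<cdot> mt = (t2 \<cdot> l) \<cdot> p1" "t2 \<cdot> mt = (t2 \<cdot> l) \<cdot> p2"
    "is_pullback C t1 (t2 \<cdot> l) mt p1"
    using equivalence_kernel_square_pullback[OF E K P] by blast
  moreover have "mono C (t2 \<cdot> l)"
    using mono_snd_comp_kernel_fst[OF equivalence_relation_relation[OF E] K] .
  moreover have "Dom C (t2 \<cdot> l) = Dom C l" "Cod C (t2 \<cdot> l) = Y"
    using r k by simp_all
  ultimately show ?thesis
    unfolding bourn_normal_def using E P by metis
qed

lemma kernel_lifts_to_kernel_pair:
  assumes Q: "is_pullback C f f q1 q2" and K: "is_kernel C \<kappa> f"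
  obtains k where "is_kernel C k q1" "q2 \<cdot> k = \<kappa>"
proof -
  note sq = pullbackD[OF Q] and \<kappa> = kernelD[OF K]
  obtain k where k: "Dom C k = Dom C \<kappa>" "Cod C k = Dom C q1" "q1 \<cdot> k = zero_hom (Dom C \<kappa>) (Dom C f)"
    "q2 \<cdot> k = \<kappa>"
    using pullback_factor[OF Q, of "zero_hom (Dom C \<kappa>) (Dom C f)" \<kappa>] \<kappa> sq by auto
  have "is_kernel C k q1"
  proof (rule kernelI)
    show "mono C k"
      using mono_if_comp_mono[of q2 k] kernel_mono[OF K] k sq by simp
    fix a assume a: "Cod C a = Dom C q1" "q1 \<cdot> a = zero_hom (Dom C a) (Cod C q1)"
    have "f \<cdot> q2 \<cdot> a = zero_hom (Dom C a) (Cod C f)"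
      using comp_reassoc[OF sq(5), of a, symmetric] comp_reassoc[OF a(2), of f] a sq by simp
    then obtain c where c: "Dom C c = Dom C a" "Cod C c = Dom C \<kappa>" "\<kappa> \<cdot> c = q2 \<cdot> a"
      using kernel_factor[OF K, of "q2 \<cdot> a"] a sq by auto
    have "k \<cdot> c = a"
      by (rule pullback_jointly_mono[OF Q])
        (use comp_reassoc[OF k(3), of c] comp_reassoc[OF k(4), of c] k c a sq \<kappa> in simp_all)
    with c k show "\<exists>h. Dom C h = Dom C a \<and> Cod C h = Dom C k \<and> k \<cdot> h = a"
      by auto
  qed (use k sq in simp_all)
  with k show thesis
    using that by blast
qed

lemma kernel_bourn_normal:
  assumes K: "is_kernel C \<kappa> f"
  shows "bourn_normal C \<kappa>"
proof -
  obtain q1 q2 where Q: "is_pullback C f f q1 q2"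
    using pullback_exists by blast
  obtain k where "is_kernel C k q1" "q2 \<cdot> k = \<kappa>"
    using kernel_lifts_to_kernel_pair[OF Q K] .
  then show ?thesis
    using bourn_normal_snd_comp_kernel_fst[OF kernel_pair_equivalence_relation[OF Q]] by metis
qed

text \<open>The kernel is \<open>\<langle>0, 1\<rangle> : S \<rightarrow> S \<times> S\<close> followed by the comparison \<open>S \<times> S \<rightarrow> R\<close>.\<close>
lemma bourn_normalE:
  assumes N: "bourn_normal C n"
  obtains R r1 r2 k where "equivalence_relation C R r1 r2 (Cod C n)" "is_kernel C k r1"
    "Dom C k = Dom C n" "r2 \<cdot> k = n"
proof -
  define S where "S = Dom C n"
  obtain R r1 r2 p1 p2 mt where E: "equivalence_relation C R r1 r2 (Cod C n)"
    and P: "is_product C S S p1 p2" and mt: "hom C mt (Dom C p1) R" "r1 \<cdot> mt = n \<cdot> p1" "r2 \<cdot> mt = n \<cdot> p2"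
    and PB: "is_pullback C r1 n mt p1" and "mono C n"
    using N unfolding bourn_normal_def S_def by blast
  note r = relationD[OF equivalence_relation_relation[OF E]]
    and pr = productD[OF P]
  obtain e where e: "Dom C e = S" "Cod C e = Dom C p1" "p1 \<cdot> e = zero_hom S S" "p2 \<cdot> e = Idm C S"
    using product_factor[OF P, of "zero_hom S S" "Idm C S"] by auto
  have k1: "r1 \<cdot> mt \<cdot> e = zero_hom S (Cod C n)"
    using comp_reassoc[OF mt(2), of e] comp_reassoc[OF e(3), of n, symmetric] mt e r pr S_def by simp
  have k2: "r2 \<cdot> mt \<cdot> e = n"
    using comp_reassoc[OF mt(3), of e] mt e r pr S_def by simp
  have "is_kernel C (mt \<cdot> e) r1"
  proof (rule kernelI)
    show "mono C (mt \<cdot> e)"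
      using mono_if_comp_mono[of r2 "mt \<cdot> e"] k2 \<open>mono C n\<close> mt e r by simp
    fix a assume a: "Cod C a = Dom C r1" "r1 \<cdot> a = zero_hom (Dom C a) (Cod C r1)"
    then obtain h where h: "Dom C h = Dom C a" "Cod C h = Dom C mt" "mt \<cdot> h = a"
      "p1 \<cdot> h = zero_hom (Dom C a) S"
      using pullback_factor[OF PB, of a "zero_hom (Dom C a) S"] r S_def by auto
    have "e \<cdot> p2 \<cdot> h = h"
      by (rule product_jointly_mono[OF P])
        (use comp_reassoc[OF e(3), of "p2 \<cdot> h"] comp_reassoc[OF e(4), of "p2 \<cdot> h"] e h mt pr in simp_all)
    then show "\<exists>h. Dom C h = Dom C a \<and> Cod C h = Dom C (mt \<cdot> e) \<and> (mt \<cdot> e) \<cdot> h = a"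
      using h e mt pr by (intro exI[of _ "p2 \<cdot> h"]) simp
  qed (use k1 mt e r in simp_all)
  then show thesis
    using that E k2 mt e S_def by simp
qed

section \<open>Restricting a reflexive relation along a Bourn-normal monomorphism\<close>

text \<open>Given an equivalence relation \<open>E\<close> on the object \<open>R\<close> of a reflexive relation with
  splitting \<open>s\<close> of \<open>r1\<close>, the equalizer \<open>j\<close> of \<open>e1\<close> and \<open>s r1 e2\<close> is, elementwise,
  \<open>{x \<in> R. s (r1 x) E x}\<close>, embedded into \<open>R\<close> by \<open>e2 j\<close>.\<close>
context
  fixes R r1 r2 Y s E e1 e2 j
  assumes R: "relation C R r1 r2 Y"
    and s: "hom C s Y R" "r1 \<cdot> s = Idm C Y" "r2 \<cdot> s = Idm C Y"
    and E: "equivalence_relation C E e1 e2 R"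
    and j: "Cod C j = E" "e1 \<cdot> j = (s \<cdot> r1 \<cdot> e2) \<cdot> j" "mono C j"
    and j_factor: "\<And>a. Cod C a = E \<Longrightarrow> e1 \<cdot> a = (s \<cdot> r1 \<cdot> e2) \<cdot> a \<Longrightarrow>
      \<exists>h. Dom C h = Dom C a \<and> Cod C h = Dom C j \<and> j \<cdot> h = a"
begin

lemma restriction_fst_comp: "Cod C a = Dom C j \<Longrightarrow> e1 \<cdot> j \<cdot> a = s \<cdot> r1 \<cdot> e2 \<cdot> j \<cdot> a"
  using comp_reassoc[OF j(2)] s j relationD[OF R]
    relationD[OF equivalence_relation_relation[OF E]] by simp

lemma restriction_mono: "mono C (e2 \<cdot> j)"
  unfolding mono_def
proof (intro allI impI)
  note e = relationD[OF equivalence_relation_relation[OF E]]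
  fix a b assume "Cod C a = Dom C (e2 \<cdot> j) \<and> Cod C b = Dom C (e2 \<cdot> j) \<and> Dom C a = Dom C b \<and>
    (e2 \<cdot> j) \<cdot> a = (e2 \<cdot> j) \<cdot> b"
  then have ab: "Cod C a = Dom C j" "Cod C b = Dom C j" "Dom C a = Dom C b" and "e2 \<cdot> j \<cdot> a = e2 \<cdot> j \<cdot> b"
    using e j by auto
  moreover from this have "e1 \<cdot> j \<cdot> a = e1 \<cdot> j \<cdot> b"
    using restriction_fst_comp by simp
  ultimately have "j \<cdot> a = j \<cdot> b"
    using relation_jointly_mono[OF equivalence_relation_relation[OF E],
        of "j \<cdot> a" "j \<cdot> b"] j by simp
  then show "a = b"
    using monoD[OF j(3)] ab by blast
qed

lemma restriction_reflexive_relation: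
  "reflexive_relation C (Dom C j) (r1 \<cdot> e2 \<cdot> j) (r2 \<cdot> e2 \<cdot> j) Y"
proof -
  note r = relationD[OF R]
    and e = relationD[OF equivalence_relation_relation[OF E]]
  obtain \<delta> where \<delta>: "Dom C \<delta> = R" "Cod C \<delta> = E" "e1 \<cdot> \<delta> = Idm C R" "e2 \<cdot> \<delta> = Idm C R"
    using reflexive_relationE[OF equivalence_relation_reflexive[OF E]] by blast
  have \<delta>s: "e1 \<cdot> \<delta> \<cdot> s = s" "e2 \<cdot> \<delta> \<cdot> s = s"
    using comp_reassoc[OF \<delta>(3), of s] comp_reassoc[OF \<delta>(4), of s] \<delta> s e by simp_all
  moreover have "s \<cdot> r1 \<cdot> s = s"
    using comp_reassoc[OF s(2), of s] s r by simp
  ultimately obtain \<rho> where \<rho>: "Dom C \<rho> = Y" "Cod C \<rho> = Dom C j" "j \<cdot> \<rho> = \<delta> \<cdot> s"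
    using j_factor[of "\<delta> \<cdot> s"] \<delta> s r e by auto
  have splits: "r1 \<cdot> e2 \<cdot> j \<cdot> \<rho> = Idm C Y" "r2 \<cdot> e2 \<cdot> j \<cdot> \<rho> = Idm C Y"
    using \<rho>(3) \<delta>s s by simp_all
  have "relation C (Dom C j) (r1 \<cdot> e2 \<cdot> j) (r2 \<cdot> e2 \<cdot> j) Y"
    using relation_comp_mono[OF R restriction_mono] e j by simp
  then show ?thesis
    unfolding reflexive_relation_def
    by (intro conjI exI[of _ \<rho>]) (use splits \<rho> j e r in simp_all)
qed

lemma restriction_kernel:
  assumes K: "is_kernel C k e1" and "r1 \<cdot> e2 \<cdot> k = zero_hom (Dom C k) Y"
  obtains l where "is_kernel C l (r1 \<cdot> e2 \<cdot> j)" "j \<cdot> l = k"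
proof -
  note r = relationD[OF R]
    and e = relationD[OF equivalence_relation_relation[OF E]]
    and k = kernelD[OF K]
  have "e1 \<cdot> k = (s \<cdot> r1 \<cdot> e2) \<cdot> k"
    using k assms(2) s r e by simp
  then obtain l where l: "Dom C l = Dom C k" "Cod C l = Dom C j" "j \<cdot> l = k"
    using j_factor[of k] k e by auto
  have "is_kernel C l (r1 \<cdot> e2 \<cdot> j)"
  proof (rule kernelI)
    show "mono C l"
      using mono_if_comp_mono[of j l] kernel_mono[OF K] l by simp
    fix a assume a: "Cod C a = Dom C (r1 \<cdot> e2 \<cdot> j)" "(r1 \<cdot> e2 \<cdot> j) \<cdot> a = zero_hom (Dom C a) (Cod C (r1 \<cdot> e2 \<cdot> j))"
    then have "e1 \<cdot> j \<cdot> a = zero_hom (Dom C a) (Cod C e1)"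
      using restriction_fst_comp[of a] s r e j by simp
    then obtain c where c: "Dom C c = Dom C a" "Cod C c = Dom C k" "k \<cdot> c = j \<cdot> a"
      using kernel_factor[OF K, of "j \<cdot> a"] a r e j by auto
    have "j \<cdot> l \<cdot> c = j \<cdot> a"
      using comp_reassoc[OF l(3), of c] c l by simp
    then have "l \<cdot> c = a"
      using monoD[OF j(3), of "l \<cdot> c" a] a c l r e j by simp
    with c l show "\<exists>h. Dom C h = Dom C a \<and> Cod C h = Dom C l \<and> l \<cdot> h = a"
      by auto
  qed (use l assms(2) r e j in simp_all)
  with l show thesis
    using that by blast
qed

end

lemma reflexive_subrelation_with_kernel:
  assumes R: "reflexive_relation C R r1 r2 Y" and K: "is_kernel C k r1" and u: "Dom C k = Cod C u"
    and N: "bourn_normal C (k \<cdot> u)"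
  shows "\<exists>T t1 t2 v l. reflexive_relation C T t1 t2 Y \<and> hom C v T R \<and> mono C v \<and>
    r1 \<cdot> v = t1 \<and> r2 \<cdot> v = t2 \<and> is_kernel C l t1 \<and> Dom C l = Dom C u \<and> v \<cdot> l = k \<cdot> u"
proof -
  note r = relationD[OF reflexive_relation_relation[OF R]] and k = kernelD[OF K]
  have ku: "Cod C (k \<cdot> u) = R" "Dom C (k \<cdot> u) = Dom C u"
    using k r u by simp_all
  obtain E e1 e2 k' where E: "equivalence_relation C E e1 e2 R" and K': "is_kernel C k' e1"
    and k': "Dom C k' = Dom C u" "e2 \<cdot> k' = k \<cdot> u"
    using bourn_normalE[OF N, unfolded ku] .
  note e = relationD[OF equivalence_relation_relation[OF E]]
  obtain s where s: "hom C s Y R" "r1 \<cdot> s = Idm C Y" "r2 \<cdot> s = Idm C Y"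
    using reflexive_relationE[OF R] by auto
  obtain j where j: "Cod C j = E" "e1 \<cdot> j = (s \<cdot> r1 \<cdot> e2) \<cdot> j" "mono C j"
    and j_factor: "\<And>a. Cod C a = E \<Longrightarrow> e1 \<cdot> a = (s \<cdot> r1 \<cdot> e2) \<cdot> a \<Longrightarrow>
      \<exists>h. Dom C h = Dom C a \<and> Cod C h = Dom C j \<and> j \<cdot> h = a"
    by (rule equalizer_exists[of e1 E R "s \<cdot> r1 \<cdot> e2"]) (use s r e in simp_all)
  note restriction = reflexive_relation_relation[OF R] s E j j_factor
  have "r1 \<cdot> e2 \<cdot> k' = zero_hom (Dom C k') Y"
    using comp_reassoc[OF k(2), of u] k' k r u by simp
  then obtain l where l: "is_kernel C l (r1 \<cdot> e2 \<cdot> j)" "j \<cdot> l = k'"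
    using restriction_kernel[OF restriction K'] by blast
  moreover have "Dom C l = Dom C u" "e2 \<cdot> j \<cdot> l = k \<cdot> u"
    using Dom_comp[of j l] l k' kernelD(1)[OF l(1)] e r j by simp_all
  ultimately have "reflexive_relation C (Dom C j) (r1 \<cdot> e2 \<cdot> j) (r2 \<cdot> e2 \<cdot> j) Y \<and>
      hom C (e2 \<cdot> j) (Dom C j) R \<and> mono C (e2 \<cdot> j) \<and> is_kernel C l (r1 \<cdot> e2 \<cdot> j) \<and>
      Dom C l = Dom C u \<and> (e2 \<cdot> j) \<cdot> l = k \<cdot> u"
    using restriction_reflexive_relation[OF restriction] restriction_mono[OF restriction]
      kernelD(1)[OF l(1)] e r j by simp
  then show ?thesis
    by blast
qed

section \<open>Characteristic monomorphisms\<close>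

text \<open>Conditions (c) and (d) of the theorem, for \<open>P\<close> the reflexive resp. the equivalence relations.\<close>
definition restricts_to_subrelations :: "('o \<Rightarrow> 'm \<Rightarrow> 'm \<Rightarrow> 'o \<Rightarrow> bool) \<Rightarrow> 'm \<Rightarrow> bool" where
  "restricts_to_subrelations P u \<longleftrightarrow>
    (\<forall>Y R r1 r2 k. P R r1 r2 Y \<and> is_kernel C k r1 \<and> Dom C k = Cod C u \<longrightarrow>
      (\<exists>T t1 t2 v l. P T t1 t2 Y \<and> hom C v T R \<and> mono C v \<and> r1 \<cdot> v = t1 \<and> r2 \<cdot> v = t2 \<and>
        is_kernel C l t1 \<and> Dom C l = Dom C u \<and> v \<cdot> l = k \<cdot> u))"

lemma protosplit_mono_bourn_normal: "protosplit_mono C \<kappa> \<Longrightarrow> bourn_normal C \<kappa>"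
  unfolding protosplit_mono_def using kernel_bourn_normal by blast

lemma restricts_to_subrelations_if_protosplit_normal:
  assumes "\<forall>\<kappa>. protosplit_mono C \<kappa> \<and> Dom C \<kappa> = Cod C u \<longrightarrow> bourn_normal C (\<kappa> \<cdot> u)"
  shows "restricts_to_subrelations (reflexive_relation C) u"
  unfolding restricts_to_subrelations_def
proof (intro allI impI)
  fix Y R r1 r2 k assume "reflexive_relation C R r1 r2 Y \<and> is_kernel C k r1 \<and> Dom C k = Cod C u"
  then have R: "reflexive_relation C R r1 r2 Y" and K: "is_kernel C k r1" and u: "Dom C k = Cod C u"
    by auto
  obtain s where "Dom C s = Y" "Cod C s = R" "r1 \<cdot> s = Idm C Y"
    using reflexive_relationE[OF R] by blast
  then have "split_epi C r1"
    unfolding split_epi_def using relationD[OF reflexive_relation_relation[OF R]] by auto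
  with K have "bourn_normal C (k \<cdot> u)"
    using assms u unfolding protosplit_mono_def by blast
  then show "\<exists>T t1 t2 v l. reflexive_relation C T t1 t2 Y \<and> hom C v T R \<and> mono C v \<and>
      r1 \<cdot> v = t1 \<and> r2 \<cdot> v = t2 \<and> is_kernel C l t1 \<and> Dom C l = Dom C u \<and> v \<cdot> l = k \<cdot> u"
    by (rule reflexive_subrelation_with_kernel[OF R K u])
qed

lemma characteristic_mono_if_restricts_to_subrelations:
  assumes maltsev: "maltsev C" and restricts: "restricts_to_subrelations (reflexive_relation C) u"
  shows "characteristic_mono C u"
  unfolding characteristic_mono_def
proof (intro allI impI)
  fix n assume n: "bourn_normal C n \<and> Dom C n = Cod C u"
  then obtain R r1 r2 k where E: "equivalence_relation C R r1 r2 (Cod C n)" and K: "is_kernel C k r1"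
    and k: "Dom C k = Dom C n" "r2 \<cdot> k = n"
    using bourn_normalE by blast
  moreover have "reflexive_relation C R r1 r2 (Cod C n) \<and> is_kernel C k r1 \<and> Dom C k = Cod C u"
    using equivalence_relation_reflexive[OF E] K k n by simp
  ultimately obtain T t1 t2 v l where T: "reflexive_relation C T t1 t2 (Cod C n)" and v: "hom C v T R"
    and t2: "r2 \<cdot> v = t2" and L: "is_kernel C l t1" and vl: "v \<cdot> l = k \<cdot> u"
    using restricts unfolding restricts_to_subrelations_def by blast
  have "equivalence_relation C T t1 t2 (Cod C n)"
    using maltsev T unfolding maltsev_def by blast
  then have "bourn_normal C (t2 \<cdot> l)"
    using L by (rule bourn_normal_snd_comp_kernel_fst)
  moreover have "t2 \<cdot> l = n \<cdot> u"
  proof -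
    note rT = relationD[OF reflexive_relation_relation[OF T]]
      and rR = relationD[OF equivalence_relation_relation[OF E]]
    have "t2 \<cdot> l = r2 \<cdot> v \<cdot> l"
      using t2[symmetric] v kernelD(1)[OF L] rT rR by simp
    also have "\<dots> = (r2 \<cdot> k) \<cdot> u"
      using vl kernelD(1)[OF K] rR k(1) n by simp
    finally show ?thesis
      using k(2) by simp
  qed
  ultimately show "bourn_normal C (n \<cdot> u)"
    by simp
qed

end

lemma maltsev_reflexive_relation_eq:
  assumes "maltsev C"
  shows "reflexive_relation C = equivalence_relation C"
proof (intro ext iffI)
  fix R r1 r2 Y
  show "reflexive_relation C R r1 r2 Y \<Longrightarrow> equivalence_relation C R r1 r2 Y"
    using assms unfolding maltsev_def by blast
  show "equivalence_relation C R r1 r2 Y \<Longrightarrow> reflexive_relation C R r1 r2 Y"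
    unfolding equivalence_relation_def by blast
qed

theorem proposition5p1:
  fixes C :: "('o, 'm) cat" and u :: 'm
  assumes "category C" and "pointed C" and "finitely_complete C" and "maltsev C"
  shows "(characteristic_mono C u
           \<longleftrightarrow> (\<forall>\<kappa>. protosplit_mono C \<kappa> \<and> Dom C \<kappa> = Cod C u \<longrightarrow> bourn_normal C (Comp C \<kappa> u)))
       \<and> ((\<forall>\<kappa>. protosplit_mono C \<kappa> \<and> Dom C \<kappa> = Cod C u \<longrightarrow> bourn_normal C (Comp C \<kappa> u))
           \<longleftrightarrow> (\<forall>Y R r1 r2 k. reflexive_relation C R r1 r2 Y \<and> is_kernel C k r1 \<and> Dom C k = Cod C u \<longrightarrow>
                 (\<exists>T t1 t2 v l. reflexive_relation C T t1 t2 Y \<and> hom C v T R \<and> mono C v \<and>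
                    Comp C r1 v = t1 \<and> Comp C r2 v = t2 \<and> is_kernel C l t1 \<and> Dom C l = Dom C u \<and>
                    Comp C v l = Comp C k u)))
       \<and> ((\<forall>Y R r1 r2 k. reflexive_relation C R r1 r2 Y \<and> is_kernel C k r1 \<and> Dom C k = Cod C u \<longrightarrow>
                 (\<exists>T t1 t2 v l. reflexive_relation C T t1 t2 Y \<and> hom C v T R \<and> mono C v \<and>
                    Comp C r1 v = t1 \<and> Comp C r2 v = t2 \<and> is_kernel C l t1 \<and> Dom C l = Dom C u \<and>
                    Comp C v l = Comp C k u))
           \<longleftrightarrow> (\<forall>Y R r1 r2 k. equivalence_relation C R r1 r2 Y \<and> is_kernel C k r1 \<and> Dom C k = Cod C u \<longrightarrow>
                 (\<exists>T t1 t2 v l. equivalence_relation C T t1 t2 Y \<and> hom C v T R \<and> mono C v \<and>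
                    Comp C r1 v = t1 \<and> Comp C r2 v = t2 \<and> is_kernel C l t1 \<and> Dom C l = Dom C u \<and>
                    Comp C v l = Comp C k u)))"
proof -
  interpret pointed_finitely_complete_category C
    using assms(1-3) by unfold_locales
  have a_b: "characteristic_mono C u \<Longrightarrow> protosplit_mono C \<kappa> \<Longrightarrow> Dom C \<kappa> = Cod C u \<Longrightarrow>
      bourn_normal C (Comp C \<kappa> u)" for \<kappa>
    using protosplit_mono_bourn_normal unfolding characteristic_mono_def by blast
  note b_c = restricts_to_subrelations_if_protosplit_normal[of u]
  note c_a = characteristic_mono_if_restricts_to_subrelations[OF assms(4), of u]
  have c_d: "restricts_to_subrelations (reflexive_relation C) u = restricts_to_subrelations (equivalence_relation C) u"
    by (simp only: maltsev_reflexive_relation_eq[OF assms(4)])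
  show ?thesis
    unfolding restricts_to_subrelations_def[symmetric]
    using a_b b_c c_a c_d by blast
qed

end
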